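(* Suppose the monotone likelihood ratio property holds: for all $\rho,\rho'\in\mathcal{R}$ with $\rho>\rho'$, $$\frac{\Pr\{R=\rho\mid Y=1\}}{\Pr\{R=\rho\mid Y=0\}}\ge\frac{\Pr\{R=\rho'\mid Y=1\}}{\Pr\{R=\rho'\mid Y=0\}}.$$ Then the accuracy $\theta(\epsilon)=\Pr\{Y_{\mathscr{A}_\epsilon(\mathbf{D})}=1\}$ of the exponential mechanism is increasing in $\epsilon\ge 0$.
   Context: There are $n$ individuals indexed by $\mathcal{N}=\{1,\dots,n\}$. Individual $i$ is described by a random tuple $(X_i,A_i,Y_i)$, where $X_i\in\mathcal{X}$ are observable features, $A_i\in\{0,1\}$ is a protected attribute and $Y_i\in\{0,1\}$ is a hidden qualification state; the tuples are i.i.d. with a common distribution $\mathsf{F}$, and $(X,A,Y)$ denotes a generic tuple with distribution $\mathsf{F}$. A fixed function $r:\mathcal{X}\to\mathcal{R}$ is given, where $\mathcal{R}=\{\rho_1,\dots,\rho_{n'}\}\subset[0,1]$ is finite with $\rho_1=0$, $\rho_{n'}=1$; $R_i=r(X_i)$ and $R=r(X)$. The database is $\mathbf{D}=(X_1,\dots,X_n)$. For $\epsilon\ge0$, the exponential mechanism $\mathscr{A}_\epsilon$, given realized scores $(r_1,\dots,r_n)$, selects individual $i$ with probability $\exp(\epsilon r_i/2)/\sum_{j=1}^n\exp(\epsilon r_j/2)$; $\mathscr{A}_\epsilon(\mathbf{D})$ denotes the selected index, and $Y_{\mathscr{A}_\epsilon(\mathbf{D})}$ the qualification state of the selected individual.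 *)

theory Defs
  imports "HOL-Probability.Probability"
begin

text \<open>A generic individual is a tuple (X, A, Y) :: 'x \<times> bool \<times> bool, where the
  protected attribute A and qualification Y are encoded as booleans (True = 1).\<close>

definition feat :: "'x \<times> bool \<times> bool \<Rightarrow> 'x" where "feat \<omega> = fst \<omega>"
definition qual :: "'x \<times> bool \<times> bool \<Rightarrow> bool" where "qual \<omega> = snd (snd \<omega>)"

definition score_cond :: "('x \<times> bool \<times> bool) measure \<Rightarrow> ('x \<Rightarrow> real) \<Rightarrow> real \<Rightarrow> bool \<Rightarrow> real" where
  "score_cond F r \<rho> y =
     measure F {\<omega> \<in> space F. r (feat \<omega>) = \<rho> \<and> qual \<omega> = y} / measure F {\<omega> \<in> space F. qual \<omega> = y}"

definition exp_mech_prob :: "real \<Rightarrow> nat \<Rightarrow> (nat \<Rightarrow> real) \<Rightarrow> nat \<Rightarrow> real" where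
  "exp_mech_prob \<epsilon> n sc i = exp (\<epsilon> * sc i / 2) / (\<Sum>j<n. exp (\<epsilon> * sc j / 2))"

text \<open>Accuracy theta(eps) = Pr{Y_{A_eps(D)} = 1}: the database consists of n i.i.d.
  tuples (product measure of n copies of F), and given the tuples the mechanism
  selects i with the exponential-mechanism probability.\<close>
definition accuracy :: "('x \<times> bool \<times> bool) measure \<Rightarrow> ('x \<Rightarrow> real) \<Rightarrow> nat \<Rightarrow> real \<Rightarrow> real" where
  "accuracy F r n \<epsilon> =
     (\<integral>\<omega>. (\<Sum>i<n. (if qual (\<omega> i) then exp_mech_prob \<epsilon> n (\<lambda>j. r (feat (\<omega> j))) i else 0))
        \<partial>(PiM {..<n} (\<lambda>_. F)))"

end

theory Submission
  imports Defs
begin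

(* Given the score vector rho of the database, the mechanism selects i with probability
   pi_eps(rho)_i proportional to exp (eps * rho_i / 2), so by independence the accuracy is
   sum_rho sum_i pi_eps(rho)_i * w_rho(i) with w_rho(i) = Pr{R = rho_i, Y = 1} * prod_{j ~= i} Pr{R = rho_j}.
   The monotone likelihood ratio makes w_rho(i) nondecreasing in rho_i, and passing from eps to
   eps' >= eps reweights pi_eps by the factor exp ((eps' - eps) * rho_i / 2), which is also
   nondecreasing in rho_i. A Chebyshev-type covariance inequality shows that reweighting by a
   factor similarly ordered with the integrand cannot decrease the average. *)

lemma weighted_mean_le_reweighted_mean:
  fixes a c q :: "'i \<Rightarrow> real"
  assumes "finite I"
    and a_pos: "\<And>i. i \<in> I \<Longrightarrow> a i > 0" and c_pos: "\<And>i. i \<in> I \<Longrightarrow> c i > 0"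
    and similarly_ordered: "\<And>i j. i \<in> I \<Longrightarrow> j \<in> I \<Longrightarrow> (q i - q j) * (c i - c j) \<ge> 0"
  shows "(\<Sum>i\<in>I. a i / (\<Sum>j\<in>I. a j) * q i) \<le> (\<Sum>i\<in>I. a i * c i / (\<Sum>j\<in>I. a j * c j) * q i)"
proof (cases "I = {}")
  case False
  define A where "A = (\<Sum>j\<in>I. a j)"
  define B where "B = (\<Sum>j\<in>I. a j * c j)"
  have "A > 0" "B > 0"
    unfolding A_def B_def using \<open>finite I\<close> False a_pos c_pos by (auto intro!: sum_pos)
  have "0 \<le> (\<Sum>i\<in>I. \<Sum>j\<in>I. a i * a j * ((q i - q j) * (c i - c j)))"
    using a_pos similarly_ordered by (intro sum_nonneg) (simp add: less_imp_le)
  also have "\<dots> = (\<Sum>i\<in>I. \<Sum>j\<in>I. (a i * q i * c i) * a j + a i * (a j * q j * c j)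
               - (a i * q i) * (a j * c j) - (a i * c i) * (a j * q j))"
    by (intro sum.cong refl) (simp add: algebra_simps)
  also have "\<dots> = (\<Sum>i\<in>I. a i * q i * c i) * A + A * (\<Sum>i\<in>I. a i * q i * c i)
       - (\<Sum>i\<in>I. a i * q i) * B - B * (\<Sum>i\<in>I. a i * q i)"
    unfolding A_def B_def sum_product by (simp add: sum.distrib sum_subtractf)
  finally have "(\<Sum>i\<in>I. a i * q i) * B \<le> (\<Sum>i\<in>I. a i * q i * c i) * A"
    by (simp add: algebra_simps)
  then have "(\<Sum>i\<in>I. a i * q i) / A \<le> (\<Sum>i\<in>I. a i * q i * c i) / B"
    using \<open>A > 0\<close> \<open>B > 0\<close> by (simp add: divide_simps mult.commute)
  then show ?thesis
    by (simp add: A_def[symmetric] B_def[symmetric] sum_divide_distrib mult_ac)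
qed simp

lemma exp_mech_expectation_mono:
  fixes \<rho> q :: "nat \<Rightarrow> real"
  assumes "e \<le> e'"
    and q_mono: "\<And>j k. j < n \<Longrightarrow> k < n \<Longrightarrow> \<rho> k < \<rho> j \<Longrightarrow> q k \<le> q j"
  shows "(\<Sum>i<n. exp_mech_prob e n \<rho> i * q i) \<le> (\<Sum>i<n. exp_mech_prob e' n \<rho> i * q i)"
proof -
  define a where "a i = exp (e * \<rho> i / 2)" for i
  define c where "c i = exp ((e' - e) * \<rho> i / 2)" for i
  have tilt: "a i * c i = exp (e' * \<rho> i / 2)" for i
    unfolding a_def c_def by (simp add: exp_add[symmetric] field_simps)
  have c_mono: "c k \<le> c j" if "\<rho> k < \<rho> j" for j k
    unfolding c_def using \<open>e \<le> e'\<close> that by (simp add: mult_left_mono)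
  have "(q i - q j) * (c i - c j) \<ge> 0" if "i < n" "j < n" for i j
  proof (cases "\<rho> i" "\<rho> j" rule: linorder_cases)
    case less
    then show ?thesis using q_mono[OF that(2,1)] c_mono[of i j] by (simp add: mult_nonpos_nonpos)
  next
    case equal
    then show ?thesis by (simp add: c_def)
  next
    case greater
    then show ?thesis using q_mono[OF that] c_mono[of j i] by simp
  qed
  then have "(\<Sum>i<n. a i / (\<Sum>j<n. a j) * q i) \<le> (\<Sum>i<n. a i * c i / (\<Sum>j<n. a j * c j) * q i)"
    by (intro weighted_mean_le_reweighted_mean) (auto simp: a_def c_def)
  then show ?thesis
    unfolding exp_mech_prob_def tilt by (simp add: a_def)
qed

lemma mlr_selection_weight_mono:
  fixes p :: "real \<Rightarrow> bool \<Rightarrow> real" and \<rho> :: "'i \<Rightarrow> real"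
  assumes "finite I" "j \<in> I" "k \<in> I" "\<rho> k < \<rho> j"
    and nonneg: "\<And>x b. p x b \<ge> 0"
    and mlr: "p (\<rho> k) True * p (\<rho> j) False \<le> p (\<rho> j) True * p (\<rho> k) False"
  shows "p (\<rho> k) True * (\<Prod>l\<in>I - {k}. p (\<rho> l) True + p (\<rho> l) False)
       \<le> p (\<rho> j) True * (\<Prod>l\<in>I - {j}. p (\<rho> l) True + p (\<rho> l) False)"
proof -
  let ?m = "\<lambda>l. p (\<rho> l) True + p (\<rho> l) False"
  define P where "P = (\<Prod>l\<in>I - {j} - {k}. ?m l)"
  have "j \<noteq> k" using \<open>\<rho> k < \<rho> j\<close> by auto
  have "P \<ge> 0" unfolding P_def using nonneg by (intro prod_nonneg) (simp add: add_nonneg_nonneg)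
  have "I - {k} - {j} = I - {j} - {k}" by blast
  then have "(\<Prod>l\<in>I - {k}. ?m l) = ?m j * P"
    using assms(1-3) \<open>j \<noteq> k\<close> unfolding P_def by (subst prod.remove[of _ j]) auto
  moreover have "(\<Prod>l\<in>I - {j}. ?m l) = ?m k * P"
    using assms(1-3) \<open>j \<noteq> k\<close> unfolding P_def by (subst prod.remove[of _ k]) auto
  moreover have "p (\<rho> k) True * ?m j \<le> p (\<rho> j) True * ?m k"
    using mlr by (simp add: algebra_simps)
  ultimately show ?thesis
    using \<open>P \<ge> 0\<close> by (simp add: mult.assoc[symmetric] mult_right_mono)
qed

lemma sum_PiE_Times:
  "(\<Sum>v\<in>PiE I (\<lambda>i. A i \<times> B i). f v) = (\<Sum>a\<in>PiE I A. \<Sum>b\<in>PiE I B. f (\<lambda>i\<in>I. (a i, b i)))"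
proof -
  have "bij_betw (\<lambda>(a, b). \<lambda>i\<in>I. (a i, b i)) (PiE I A \<times> PiE I B) (PiE I (\<lambda>i. A i \<times> B i))"
    by (rule bij_betwI[where g = "\<lambda>v. (\<lambda>i\<in>I. fst (v i), \<lambda>i\<in>I. snd (v i))"])
      (auto simp: PiE_iff fun_eq_iff extensional_def mem_Times_iff)
  then show ?thesis
    by (simp add: sum.cartesian_product sum.reindex_bij_betw[symmetric] case_prod_beta')
qed

lemma sum_PiE_bool_marginal:
  fixes P :: "'i \<Rightarrow> bool \<Rightarrow> real"
  assumes "finite I"
  shows "(\<Sum>y\<in>PiE I (\<lambda>_. UNIV). (\<Sum>i\<in>I. if y i then w i else 0) * (\<Prod>j\<in>I. P j (y j)))
       = (\<Sum>i\<in>I. w i * (P i True * (\<Prod>j\<in>I - {i}. P j True + P j False)))"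
proof -
  have marginal: "(\<Sum>y\<in>PiE I (\<lambda>_. UNIV). if y i then \<Prod>j\<in>I. P j (y j) else 0)
      = P i True * (\<Prod>j\<in>I - {i}. P j True + P j False)" if "i \<in> I" for i
  proof -
    define f where "f j b = (if j = i \<and> \<not> b then 0 else P j b)" for j b
    have "(\<Sum>y\<in>PiE I (\<lambda>_. UNIV). if y i then \<Prod>j\<in>I. P j (y j) else 0)
        = (\<Sum>y\<in>PiE I (\<lambda>_. UNIV). \<Prod>j\<in>I. f j (y j))"
      using \<open>finite I\<close> \<open>i \<in> I\<close> unfolding f_def by (intro sum.cong refl) (auto intro!: prod.cong prod_zero)
    also have "\<dots> = (\<Prod>j\<in>I. \<Sum>b\<in>UNIV. f j b)"
      using \<open>finite I\<close> by (intro prod_sum_PiE[symmetric]) auto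
    also have "\<dots> = (\<Sum>b\<in>UNIV. f i b) * (\<Prod>j\<in>I - {i}. \<Sum>b\<in>UNIV. f j b)"
      using \<open>finite I\<close> \<open>i \<in> I\<close> by (rule prod.remove)
    finally show ?thesis
      by (simp add: f_def UNIV_bool add.commute)
  qed
  have "(\<Sum>y\<in>PiE I (\<lambda>_. UNIV). (\<Sum>i\<in>I. if y i then w i else 0) * (\<Prod>j\<in>I. P j (y j)))
      = (\<Sum>y\<in>PiE I (\<lambda>_. UNIV). \<Sum>i\<in>I. w i * (if y i then \<Prod>j\<in>I. P j (y j) else 0))"
    unfolding sum_distrib_right by (intro sum.cong refl) simp
  also have "\<dots> = (\<Sum>i\<in>I. w i * (\<Sum>y\<in>PiE I (\<lambda>_. UNIV). if y i then \<Prod>j\<in>I. P j (y j) else 0))"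
    by (simp add: sum.swap[of _ I] sum_distrib_left)
  finally show ?thesis
    by (simp add: marginal)
qed

lemma integral_PiM_finite_valued:
  fixes M :: "'a measure" and s :: "'a \<Rightarrow> 'b" and h :: "('i \<Rightarrow> 'b) \<Rightarrow> real"
  assumes "prob_space M" "finite I" "finite S"
    and s_range: "\<And>x. x \<in> space M \<Longrightarrow> s x \<in> S"
    and s_level_sets: "\<And>b. {x \<in> space M. s x = b} \<in> sets M"
  shows "(\<integral>\<omega>. h (\<lambda>j\<in>I. s (\<omega> j)) \<partial>PiM I (\<lambda>_. M))
       = (\<Sum>v\<in>PiE I (\<lambda>_. S). h v * (\<Prod>j\<in>I. measure M {x \<in> space M. s x = v j}))"
proof -
  interpret finite_product_prob_space "\<lambda>_. M" I
    using assms(1,2) by (auto simp: finite_product_prob_space_def finite_product_sigma_finite_def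
        finite_product_sigma_finite_axioms_def product_sigma_finite_def product_prob_spaceI
        prob_space_imp_sigma_finite)
  define E where "E v = PiE I (\<lambda>j. {x \<in> space M. s x = v j})" for v
  have E_sets: "E v \<in> sets (PiM I (\<lambda>_. M))" for v
    unfolding E_def using s_level_sets \<open>finite I\<close> by (intro sets_PiM_I_finite) auto
  have "h (\<lambda>j\<in>I. s (\<omega> j)) = (\<Sum>v\<in>PiE I (\<lambda>_. S). h v * indicator (E v) \<omega>)"
    if \<omega>: "\<omega> \<in> space (PiM I (\<lambda>_. M))" for \<omega>
  proof -
    define t where "t = (\<lambda>j\<in>I. s (\<omega> j))"
    have "t \<in> PiE I (\<lambda>_. S)"
      using \<omega> s_range by (auto simp: t_def space_PiM)
    have "indicator (E v) \<omega> = (if v = t then 1 else 0 :: real)" if "v \<in> PiE I (\<lambda>_. S)" for v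
      using \<omega> that by (auto simp: t_def E_def indicator_def space_PiM PiE_iff fun_eq_iff extensional_def) metis
    then have "(\<Sum>v\<in>PiE I (\<lambda>_. S). h v * indicator (E v) \<omega>) = (\<Sum>v\<in>PiE I (\<lambda>_. S). if v = t then h v else 0)"
      by (intro sum.cong) auto
    also have "\<dots> = h t"
      using \<open>t \<in> PiE I (\<lambda>_. S)\<close> \<open>finite I\<close> \<open>finite S\<close> by (simp add: finite_PiE)
    finally show ?thesis by (simp add: t_def)
  qed
  then have "(\<integral>\<omega>. h (\<lambda>j\<in>I. s (\<omega> j)) \<partial>PiM I (\<lambda>_. M))
      = (\<integral>\<omega>. (\<Sum>v\<in>PiE I (\<lambda>_. S). h v * indicator (E v) \<omega>) \<partial>PiM I (\<lambda>_. M))"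
    by (intro Bochner_Integration.integral_cong) auto
  also have "\<dots> = (\<Sum>v\<in>PiE I (\<lambda>_. S). h v * measure (PiM I (\<lambda>_. M)) (E v))"
    using E_sets by (subst Bochner_Integration.integral_sum)
      (auto intro!: integrable_mult_right integrable_real_indicator simp: sets.Int_space_eq2 P.emeasure_eq_measure)
  also have "\<dots> = (\<Sum>v\<in>PiE I (\<lambda>_. S). h v * (\<Prod>j\<in>I. measure M {x \<in> space M. s x = v j}))"
    unfolding E_def using s_level_sets by (simp add: finite_measure_PiM_emb)
  finally show ?thesis .
qed

definition joint_prob :: "('x \<times> bool \<times> bool) measure \<Rightarrow> ('x \<Rightarrow> real) \<Rightarrow> real \<Rightarrow> bool \<Rightarrow> real" where
  "joint_prob F r \<rho> y = measure F {\<omega> \<in> space F. r (feat \<omega>) = \<rho> \<and> qual \<omega> = y}"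

lemma joint_prob_mlr:
  assumes "prob_space F" "qual \<in> measurable F (count_space UNIV)"
    and mlr: "score_cond F r \<rho>' True * score_cond F r \<rho> False
              \<le> score_cond F r \<rho> True * score_cond F r \<rho>' False"
  shows "joint_prob F r \<rho>' True * joint_prob F r \<rho> False
       \<le> joint_prob F r \<rho> True * joint_prob F r \<rho>' False"
proof -
  interpret prob_space F by fact
  define Q where "Q y = measure F {\<omega> \<in> space F. qual \<omega> = y}" for y
  note [measurable] = assms(2)
  have "{\<omega> \<in> space F. qual \<omega> = y} \<in> sets F" for y
    by measurable
  then have joint_le: "joint_prob F r x y \<le> Q y" for x y
    unfolding joint_prob_def Q_def by (intro finite_measure_mono) auto
  have vanish: "joint_prob F r x y = 0" if "Q y = 0" for x y
    using that joint_le[of x y] unfolding joint_prob_def by (simp add: order_antisym)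
  show ?thesis
  proof (cases "Q True = 0 \<or> Q False = 0")
    case True
    \<comment> \<open>Then score_cond divides by zero, but the joint probabilities with the null
      label vanish, so both sides are 0.\<close>
    then show ?thesis by (auto simp: vanish)
  next
    case False
    then have Q_pos: "Q y > 0" for y
      unfolding Q_def by (cases y) (auto simp: less_le)
    have joint_eq: "joint_prob F r x y = score_cond F r x y * Q y" for x y
      using Q_pos[of y] unfolding score_cond_def joint_prob_def Q_def by simp
    have "joint_prob F r \<rho>' True * joint_prob F r \<rho> False
        = (score_cond F r \<rho>' True * score_cond F r \<rho> False) * (Q True * Q False)"
      by (simp add: joint_eq mult_ac)
    also have "\<dots> \<le> (score_cond F r \<rho> True * score_cond F r \<rho>' False) * (Q True * Q False)"
      using mlr Q_pos by (intro mult_right_mono) (auto simp: less_imp_le)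
    also have "\<dots> = joint_prob F r \<rho> True * joint_prob F r \<rho>' False"
      by (simp add: joint_eq mult_ac)
    finally show ?thesis .
  qed
qed

lemma exp_mech_prob_cong:
  assumes "i < n" "\<And>j. j < n \<Longrightarrow> sc j = sc' j"
  shows "exp_mech_prob \<epsilon> n sc i = exp_mech_prob \<epsilon> n sc' i"
proof -
  have "(\<Sum>j<n. exp (\<epsilon> * sc j / 2)) = (\<Sum>j<n. exp (\<epsilon> * sc' j / 2))"
    using assms(2) by (intro sum.cong) auto
  then show ?thesis
    using assms unfolding exp_mech_prob_def by simp
qed

lemma accuracy_eq_sum:
  fixes F :: "('x \<times> bool \<times> bool) measure" and r :: "'x \<Rightarrow> real"
  assumes "prob_space F" "(\<lambda>\<omega>. r (feat \<omega>)) \<in> borel_measurable F"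
    and "qual \<in> measurable F (count_space UNIV)" and "finite R" and "\<forall>x. r x \<in> R"
  shows "accuracy F r n \<epsilon> = (\<Sum>\<rho>\<in>PiE {..<n} (\<lambda>_. R). \<Sum>i<n. exp_mech_prob \<epsilon> n \<rho> i *
           (joint_prob F r (\<rho> i) True *
            (\<Prod>j\<in>{..<n} - {i}. joint_prob F r (\<rho> j) True + joint_prob F r (\<rho> j) False)))"
    (is "_ = ?rhs")
proof -
  note [measurable] = assms(2,3)
  define s where "s \<omega> = (r (feat \<omega>), qual \<omega>)" for \<omega>
  define h where "h v = (\<Sum>i<n. if snd (v i) then exp_mech_prob \<epsilon> n (\<lambda>j. fst (v j)) i else 0)" for v
  have "{\<omega> \<in> space F. s \<omega> = b} = {\<omega> \<in> space F. r (feat \<omega>) = fst b \<and> qual \<omega> = snd b}" for b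
    by (cases b) (auto simp: s_def)
  moreover have "{\<omega> \<in> space F. r (feat \<omega>) = fst b \<and> qual \<omega> = snd b} \<in> sets F" for b
    by measurable
  ultimately have s_level_sets: "{\<omega> \<in> space F. s \<omega> = b} \<in> sets F" for b
    by simp
  have h_restrict: "h (\<lambda>j\<in>{..<n}. (\<rho> j, y j)) = (\<Sum>i<n. if y i then exp_mech_prob \<epsilon> n \<rho> i else 0)"
    for \<rho> y
    unfolding h_def by (intro sum.cong refl) (auto intro: exp_mech_prob_cong)
  have "accuracy F r n \<epsilon> = (\<integral>\<omega>. h (\<lambda>j\<in>{..<n}. s (\<omega> j)) \<partial>PiM {..<n} (\<lambda>_. F))"
    unfolding accuracy_def s_def h_restrict ..
  also have "\<dots> = (\<Sum>v\<in>PiE {..<n} (\<lambda>_. R \<times> UNIV). h v * (\<Prod>j<n. measure F {\<omega> \<in> space F. s \<omega> = v j}))"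
    using assms(1,4,5) s_level_sets by (intro integral_PiM_finite_valued) (auto simp: s_def)
  also have "\<dots> = (\<Sum>\<rho>\<in>PiE {..<n} (\<lambda>_. R). \<Sum>y\<in>PiE {..<n} (\<lambda>_. UNIV).
      (\<Sum>i<n. if y i then exp_mech_prob \<epsilon> n \<rho> i else 0) * (\<Prod>j<n. joint_prob F r (\<rho> j) (y j)))"
    unfolding sum_PiE_Times[where I = "{..<n}" and A = "\<lambda>_. R" and B = "\<lambda>_. UNIV"] h_restrict
    by (intro sum.cong refl arg_cong2[where f = "(*)"] prod.cong) (simp_all add: s_def joint_prob_def)
  also have "\<dots> = ?rhs"
    by (intro sum.cong refl sum_PiE_bool_marginal) simp
  finally show ?thesis .
qed

theorem theorem4:
  fixes F :: "('x \<times> bool \<times> bool) measure"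
    and r :: "'x \<Rightarrow> real"
    and \<R> :: "real set"
    and n :: nat
  assumes "prob_space F"
    and "(\<lambda>\<omega>. r (feat \<omega>)) \<in> borel_measurable F"
    and "qual \<in> measurable F (count_space UNIV)"
    and "finite \<R>" and "\<R> \<subseteq> {0..1}" and "0 \<in> \<R>" and "1 \<in> \<R>"
    and "\<forall>x. r x \<in> \<R>"
    and MLR: "\<forall>\<rho>\<in>\<R>. \<forall>\<rho>'\<in>\<R>. \<rho> > \<rho>' \<longrightarrow>
               score_cond F r \<rho> True * score_cond F r \<rho>' False
                 \<ge> score_cond F r \<rho>' True * score_cond F r \<rho> False"
  shows "mono_on {0..} (accuracy F r n)"
proof (rule mono_onI)
  \<comment> \<open>Neither \<open>\<epsilon> \<ge> 0\<close> nor the range of the scores matters: the tilting argument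
    works for any finite score set and any \<open>e \<le> e'\<close>.\<close>
  fix e e' :: real
  assume "e \<le> e'"
  have mlr: "joint_prob F r \<rho>' True * joint_prob F r \<rho> False \<le> joint_prob F r \<rho> True * joint_prob F r \<rho>' False"
    if "\<rho> \<in> \<R>" "\<rho>' \<in> \<R>" "\<rho>' < \<rho>" for \<rho> \<rho>'
    using assms(1,3) MLR that by (intro joint_prob_mlr) auto
  have joint_nonneg: "joint_prob F r x b \<ge> 0" for x b
    by (simp add: joint_prob_def)
  show "accuracy F r n e \<le> accuracy F r n e'"
    unfolding accuracy_eq_sum[OF assms(1-4,8)]
  proof (rule sum_mono, rule exp_mech_expectation_mono[OF \<open>e \<le> e'\<close>], rule mlr_selection_weight_mono)
    fix \<rho> j k
    assume "\<rho> \<in> PiE {..<n} (\<lambda>_. \<R>)" "j < n" "k < n" "\<rho> k < \<rho> j"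
    then show "joint_prob F r (\<rho> k) True * joint_prob F r (\<rho> j) False
        \<le> joint_prob F r (\<rho> j) True * joint_prob F r (\<rho> k) False"
      by (intro mlr) auto
  qed (auto intro: joint_nonneg)
qed

end
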